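(* Let $\Delta$ be a $d$-dimensional IP lattice simplex ($d\ge2$) of Gorenstein index $g$ with local Gorenstein indices $g_0,\dots,g_d$. Then, for a suitable ordering $v_0,\dots,v_d$ of its vertices, $\Delta\cong\Delta(P)$ for a matrix $P$ satisfying all hypotheses (i)–(iii) of the following construction with $A=A(\Delta)=(\alpha_0,\dots,\alpha_d)$, $\alpha_i=g|Q_\Delta|/q_i$: $P=[v_0\cdots v_d]$ is a $d\times(d+1)$ integer matrix, upper triangular in its first $d$ columns with entries $a_{ik}$ ($a_{ik}=0$ for $i>k$) and last column $(-b_1,\dots,-b_d)^T$, such that for all $k$: (i) $a_{kk}\ge1$ and $a_{kk}\mid\alpha_{k-1}$; (ii) $0\le a_{ik}<a_{kk}$ for $i<k$; (iii) $b_kw_d=a_{kk}w_{k-1}+\dots+a_{kd}w_{d-1}$, where $w_i=\mathrm{lcm}(\alpha_0,\dots,\alpha_d)/\alpha_i$.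
   Context: An IP lattice simplex is a full-dimensional simplex in $\mathbb{Q}^d$ with vertices in $\mathbb{Z}^d$ containing the origin in its interior. $\cong$ means equality up to $\mathrm{GL}(d,\mathbb{Z})$; $\Delta(P)$ is the convex hull of the columns of $P$. Weight system $Q_\Delta=(q_0,\dots,q_d)$, $q_i=|\det(v_j:j\ne i)|$, $|Q_\Delta|=\sum q_i$. Dual $\Delta^*=\{u:\langle u,v\rangle\ge-1\ \forall v\in\Delta\}$; the $k$-th local Gorenstein index is the least $g_k\ge1$ with $g_ku_k\in\mathbb{Z}^d$ for the vertex $u_k$ of $\Delta^*$ with $\langle u_k,v_j\rangle=-1$ ($j\ne k$); the Gorenstein index is $\mathrm{lcm}(g_0,\dots,g_d)$. The tuple $A(\Delta)$ consists of positive integers with $\sum1/\alpha_i=1/g$. *)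

theory Defs
  imports "Jordan_Normal_Form.Determinant" "HOL-Combinatorics.Permutations"
begin

text \<open>A lattice simplex in Q^d is given by its vertex family v_0,...,v_d,
  v :: nat => nat => int, where v j i is the i-th coordinate (i < d) of the
  vertex v_j (j <= d).\<close>

definition in_conv :: "nat \<Rightarrow> (nat \<Rightarrow> nat \<Rightarrow> int) \<Rightarrow> (nat \<Rightarrow> rat) \<Rightarrow> bool" where
  "in_conv d v x \<longleftrightarrow> (\<exists>l :: nat \<Rightarrow> rat. (\<forall>j\<le>d. l j \<ge> 0) \<and> (\<Sum>j\<le>d. l j) = 1 \<and>
      (\<forall>i<d. x i = (\<Sum>j\<le>d. l j * of_int (v j i))))"

definition origin_in_interior :: "nat \<Rightarrow> (nat \<Rightarrow> nat \<Rightarrow> int) \<Rightarrow> bool" where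
  "origin_in_interior d v \<longleftrightarrow> (\<exists>e::rat. e > 0 \<and>
      (\<forall>x. (\<forall>i<d. \<bar>x i\<bar> < e) \<longrightarrow> in_conv d v x))"

definition affinely_indep :: "nat \<Rightarrow> (nat \<Rightarrow> nat \<Rightarrow> int) \<Rightarrow> bool" where
  "affinely_indep d v \<longleftrightarrow> (\<forall>m :: nat \<Rightarrow> rat.
      (\<Sum>j\<le>d. m j) = 0 \<and> (\<forall>i<d. (\<Sum>j\<le>d. m j * of_int (v j i)) = 0) \<longrightarrow> (\<forall>j\<le>d. m j = 0))"

definition IP_lattice_simplex :: "nat \<Rightarrow> (nat \<Rightarrow> nat \<Rightarrow> int) \<Rightarrow> bool" where
  "IP_lattice_simplex d v \<longleftrightarrow> affinely_indep d v \<and> origin_in_interior d v"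

text \<open>Weight q_i = |det(v_j : j \<noteq> i)|, columns in increasing order of j.\<close>
definition weight :: "nat \<Rightarrow> (nat \<Rightarrow> nat \<Rightarrow> int) \<Rightarrow> nat \<Rightarrow> nat" where
  "weight d v k = nat \<bar>det (mat d d (\<lambda>(r, c). v (if c < k then c else Suc c) r))\<bar>"

definition total_weight :: "nat \<Rightarrow> (nat \<Rightarrow> nat \<Rightarrow> int) \<Rightarrow> nat" where
  "total_weight d v = (\<Sum>i\<le>d. weight d v i)"

definition dual_vertex :: "nat \<Rightarrow> (nat \<Rightarrow> nat \<Rightarrow> int) \<Rightarrow> nat \<Rightarrow> nat \<Rightarrow> rat" where
  "dual_vertex d v k = (THE u. (\<forall>i\<ge>d. u i = 0) \<and>
      (\<forall>j\<le>d. j \<noteq> k \<longrightarrow> (\<Sum>i<d. u i * of_int (v j i)) = -1))"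

definition local_gorenstein_index :: "nat \<Rightarrow> (nat \<Rightarrow> nat \<Rightarrow> int) \<Rightarrow> nat \<Rightarrow> nat" where
  "local_gorenstein_index d v k =
     (LEAST g::nat. g \<ge> 1 \<and> (\<forall>i<d. of_nat g * dual_vertex d v k i \<in> \<int>))"

definition gorenstein_index :: "nat \<Rightarrow> (nat \<Rightarrow> nat \<Rightarrow> int) \<Rightarrow> nat" where
  "gorenstein_index d v = Lcm (local_gorenstein_index d v ` {..d})"

text \<open>alpha_i = g |Q| / q_i (an integer by the paper).\<close>
definition alpha :: "nat \<Rightarrow> (nat \<Rightarrow> nat \<Rightarrow> int) \<Rightarrow> nat \<Rightarrow> nat" where
  "alpha d v i = gorenstein_index d v * total_weight d v div weight d v i"

definition wvec :: "nat \<Rightarrow> (nat \<Rightarrow> nat \<Rightarrow> int) \<Rightarrow> nat \<Rightarrow> nat" where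
  "wvec d v i = Lcm (alpha d v ` {..d}) div alpha d v i"

end

theory Submission
  imports Defs
begin

text \<open>Bring the matrix \<open>[v\<^sub>0 \<dots> v\<^sub>d\<^sub>-\<^sub>1]\<close> into Hermite normal form \<open>H = U [v\<^sub>0 \<dots> v\<^sub>d\<^sub>-\<^sub>1]\<close> by
  unimodular row operations; this gives the triangular shape and condition (ii).
  The weights \<open>q\<^sub>i\<close> are the absolute maximal minors, which are proportional to the barycentric
  coordinates \<open>\<lambda>\<^sub>i\<close> of the origin, and \<open>\<alpha>\<^sub>k = g / \<lambda>\<^sub>k\<close> because \<open>\<lambda>\<^sub>k \<langle>u\<^sub>k, v\<^sub>k\<rangle> = 1 - \<lambda>\<^sub>k\<close> for the
  dual vertex \<open>u\<^sub>k\<close>. Hence \<open>w\<close> is proportional to \<open>\<lambda>\<close>, so \<open>\<Sum> w\<^sub>j v\<^sub>j = 0\<close>; applying \<open>U\<close>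
  gives (iii). For (i), the integral functional \<open>g (u\<^sub>k - u\<^sub>d)\<close> vanishes on \<open>v\<^sub>j\<close> for
  \<open>j \<noteq> k, d\<close> and takes the value \<open>\<alpha>\<^sub>k\<close> on \<open>v\<^sub>k\<close>; pulled back along the unimodular \<open>U\<close> it is
  an integral functional on the columns of \<open>H\<close>, and triangularity forces \<open>H\<^sub>k\<^sub>k\<close> to divide \<open>\<alpha>\<^sub>k\<close>.\<close>

definition unimodular :: "nat \<Rightarrow> int mat \<Rightarrow> bool" where
  "unimodular n U \<longleftrightarrow> U \<in> carrier_mat n n \<and> (det U = 1 \<or> det U = -1)"

lemma unimodular_mult:
  assumes "unimodular n A" "unimodular n B"
  shows "unimodular n (A * B)"
  using assms det_mult[of A n B] unfolding unimodular_def by auto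

lemma unimodular_mult_carrier:
  "unimodular n U \<Longrightarrow> M \<in> carrier_mat n m \<Longrightarrow> U * M \<in> carrier_mat n m"
  unfolding unimodular_def by (metis mult_carrier_mat)

lemma unimodular_left_inverse:
  assumes "unimodular n U"
  shows "\<exists>U'. U' \<in> carrier_mat n n \<and> U' * U = 1\<^sub>m n"
proof (intro exI conjI)
  have U: "U \<in> carrier_mat n n" and det: "det U * det U = 1"
    using assms unfolding unimodular_def by auto
  show "det U \<cdot>\<^sub>m adj_mat U \<in> carrier_mat n n" using adj_mat(1)[OF U] by simp
  have "det U \<cdot>\<^sub>m adj_mat U * U = det U \<cdot>\<^sub>m (det U \<cdot>\<^sub>m 1\<^sub>m n)"
    using mult_smult_assoc_mat[OF adj_mat(1)[OF U] U] adj_mat(3)[OF U] by simp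
  also have "\<dots> = 1\<^sub>m n" using det by (intro eq_matI) auto
  finally show "det U \<cdot>\<^sub>m adj_mat U * U = 1\<^sub>m n" .
qed

definition row_equivalent :: "nat \<Rightarrow> int mat \<Rightarrow> int mat \<Rightarrow> bool" where
  "row_equivalent n V M \<longleftrightarrow> V \<in> carrier_mat n n \<and> (\<exists>U. unimodular n U \<and> M = U * V)"

lemma row_equivalent_refl: "V \<in> carrier_mat n n \<Longrightarrow> row_equivalent n V V"
  unfolding row_equivalent_def unimodular_def by (intro conjI exI[of _ "1\<^sub>m n"]) auto

lemma row_equivalent_carrier: "row_equivalent n V M \<Longrightarrow> M \<in> carrier_mat n n"
  unfolding row_equivalent_def unimodular_def by auto

lemma row_equivalent_det_nonzero:
  assumes "row_equivalent n V M" "det V \<noteq> 0"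
  shows "det M \<noteq> 0"
proof -
  obtain U where "V \<in> carrier_mat n n" "unimodular n U" "M = U * V"
    using assms(1) unfolding row_equivalent_def by blast
  then show ?thesis using assms(2) det_mult[of U n V] unfolding unimodular_def by auto
qed

lemma row_equivalent_mult:
  assumes "row_equivalent n V M" "unimodular n E"
  shows "row_equivalent n V (E * M)"
proof -
  obtain U where V: "V \<in> carrier_mat n n" and U: "unimodular n U" "M = U * V"
    using assms(1) unfolding row_equivalent_def by blast
  have "E * M = (E * U) * V"
    using U V assms(2) assoc_mult_mat[of E n n U n V] unfolding unimodular_def by simp
  then show ?thesis using V unimodular_mult[OF assms(2) U(1)] unfolding row_equivalent_def by blast
qed

lemma row_equivalent_addrow:
  assumes "row_equivalent n V M" "k \<noteq> l" "l < n"
  shows "row_equivalent n V (addrow a k l M)"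
proof -
  have "unimodular n (addrow_mat n a k l)"
    unfolding unimodular_def using det_addrow_mat[OF assms(2), of n a] by simp
  then show ?thesis using row_equivalent_mult[OF assms(1)]
    addrow_mat[OF row_equivalent_carrier[OF assms(1)] assms(3)] by simp
qed

lemma row_equivalent_swaprows:
  assumes "row_equivalent n V M" "k \<noteq> l" "k < n" "l < n"
  shows "row_equivalent n V (swaprows k l M)"
proof -
  have "unimodular n (swaprows_mat n k l)"
    unfolding unimodular_def using det_swaprows_mat[OF assms(3,4,2), where 'a = int] by simp
  then show ?thesis using row_equivalent_mult[OF assms(1)]
    swaprows_mat[OF row_equivalent_carrier[OF assms(1)] assms(3,4)] by simp
qed

lemma row_equivalent_multrow:
  assumes "row_equivalent n V M" "k < n" "a = 1 \<or> a = -1"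
  shows "row_equivalent n V (multrow k a M)"
proof -
  have "unimodular n (multrow_mat n k a)"
    unfolding unimodular_def using det_multrow_mat[of k n a] assms(2,3) by auto
  then show ?thesis using row_equivalent_mult[OF assms(1)]
    multrow_mat[OF row_equivalent_carrier[OF assms(1)]] by simp
qed

lemma row_equivalent_clear_entry:
  assumes "row_equivalent n V M" "p < n" "q < n" "p \<noteq> q" "k < n"
  shows "\<exists>M'. row_equivalent n V M' \<and> M' $$ (q,k) = 0 \<and>
     (\<forall>r<n. r \<noteq> p \<longrightarrow> r \<noteq> q \<longrightarrow> (\<forall>c<n. M' $$ (r,c) = M $$ (r,c))) \<and>
     (\<forall>c<n. M $$ (p,c) = 0 \<longrightarrow> M $$ (q,c) = 0 \<longrightarrow> M' $$ (p,c) = 0 \<and> M' $$ (q,c) = 0)"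
  using assms(1)
proof (induction "nat \<bar>M $$ (q,k)\<bar>" arbitrary: M rule: less_induct)
  case less
  have M: "M \<in> carrier_mat n n" using row_equivalent_carrier[OF less.prems] .
  show ?case
  proof (cases "M $$ (q,k) = 0")
    case True
    then show ?thesis using less.prems by (intro exI[of _ M]) auto
  next
    case False
    \<comment> \<open>one step of the Euclidean algorithm on the entries \<open>(p,k)\<close> and \<open>(q,k)\<close>\<close>
    define M' where "M' = swaprows p q (addrow (- (M $$ (p,k) div M $$ (q,k))) p q M)"
    have M'_eq: "M' $$ (r,c) = (if r = p then M $$ (q,c)
        else if r = q then M $$ (p,c) - (M $$ (p,k) div M $$ (q,k)) * M $$ (q,c) else M $$ (r,c))"
      if "r < n" "c < n" for r c
      using that M assms(2-4) unfolding M'_def by auto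
    have "M' $$ (q,k) = M $$ (p,k) mod M $$ (q,k)"
      using M'_eq[OF assms(3,5)] assms(4) by (simp add: minus_div_mult_eq_mod[symmetric] algebra_simps)
    then have "nat \<bar>M' $$ (q,k)\<bar> < nat \<bar>M $$ (q,k)\<bar>" using abs_mod_less False by simp
    moreover have "row_equivalent n V M'" unfolding M'_def
      using less.prems assms(2-4) by (intro row_equivalent_swaprows row_equivalent_addrow) auto
    ultimately obtain M'' where M'': "row_equivalent n V M''" "M'' $$ (q,k) = 0"
      "\<forall>r<n. r \<noteq> p \<longrightarrow> r \<noteq> q \<longrightarrow> (\<forall>c<n. M'' $$ (r,c) = M' $$ (r,c))"
      "\<forall>c<n. M' $$ (p,c) = 0 \<longrightarrow> M' $$ (q,c) = 0 \<longrightarrow> M'' $$ (p,c) = 0 \<and> M'' $$ (q,c) = 0"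
      using less.hyps by blast
    then show ?thesis using M'_eq assms(2,3) by (intro exI[of _ M'']) auto
  qed
qed

definition zero_below_diag_upto :: "nat \<Rightarrow> nat \<Rightarrow> int mat \<Rightarrow> bool" where
  "zero_below_diag_upto n j M \<longleftrightarrow> (\<forall>c<j. \<forall>r<n. c < r \<longrightarrow> M $$ (r,c) = 0)"

lemma row_equivalent_clear_below_pivot:
  assumes M: "row_equivalent n V M" "zero_below_diag_upto n j M" and j: "j < n"
  shows "\<exists>M'. row_equivalent n V M' \<and> zero_below_diag_upto n j M' \<and>
    (\<forall>q<n. j < q \<longrightarrow> q \<le> j + m \<longrightarrow> M' $$ (q,j) = 0)"
proof (induction m)
  case 0
  then show ?case using M by auto
next
  case (Suc m)
  then obtain M' where M': "row_equivalent n V M'" "zero_below_diag_upto n j M'"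
    "\<forall>q<n. j < q \<longrightarrow> q \<le> j + m \<longrightarrow> M' $$ (q,j) = 0" by blast
  show ?case
  proof (cases "Suc (j + m) < n")
    case False
    then show ?thesis using M' by (intro exI[of _ M']) auto
  next
    case True
    obtain M'' where M'': "row_equivalent n V M''" "M'' $$ (Suc (j + m), j) = 0"
      "\<forall>r<n. r \<noteq> j \<longrightarrow> r \<noteq> Suc (j + m) \<longrightarrow> (\<forall>c<n. M'' $$ (r,c) = M' $$ (r,c))"
      "\<forall>c<n. M' $$ (j,c) = 0 \<longrightarrow> M' $$ (Suc (j + m),c) = 0 \<longrightarrow>
         M'' $$ (j,c) = 0 \<and> M'' $$ (Suc (j + m),c) = 0"
      using row_equivalent_clear_entry[OF M'(1) j True _ j] by auto
    have "zero_below_diag_upto n j M''"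
      unfolding zero_below_diag_upto_def
    proof (intro allI impI)
      fix c r assume "c < j" "r < n" "c < r"
      then show "M'' $$ (r,c) = 0"
        using M'(2) M''(3,4) j True unfolding zero_below_diag_upto_def
        by (cases "r = j \<or> r = Suc (j + m)") auto
    qed
    moreover have "\<forall>q<n. j < q \<longrightarrow> q \<le> j + Suc m \<longrightarrow> M'' $$ (q,j) = 0"
      using M'(3) M''(2,3) j by (auto simp: le_Suc_eq)
    ultimately show ?thesis using M''(1) by blast
  qed
qed

lemma row_equivalent_clear_column:
  assumes "row_equivalent n V M" "zero_below_diag_upto n j M" "j < n"
  shows "\<exists>M'. row_equivalent n V M' \<and> zero_below_diag_upto n (Suc j) M'"
  using row_equivalent_clear_below_pivot[OF assms, of n]
  unfolding zero_below_diag_upto_def by (auto simp: less_Suc_eq)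

lemma row_equivalent_upper_triangular:
  assumes "V \<in> carrier_mat n n"
  shows "\<exists>M. row_equivalent n V M \<and> upper_triangular M"
proof -
  have "\<exists>M. row_equivalent n V M \<and> zero_below_diag_upto n j M" if "j \<le> n" for j
    using that
  proof (induction j)
    case 0
    then show ?case using row_equivalent_refl[OF assms] unfolding zero_below_diag_upto_def by auto
  next
    case (Suc j)
    then obtain M where "row_equivalent n V M" "zero_below_diag_upto n j M" by auto
    then show ?case using row_equivalent_clear_column Suc.prems by simp
  qed
  then obtain M where M: "row_equivalent n V M" "zero_below_diag_upto n n M" by blast
  have "upper_triangular M"
    using M(2) carrier_matD[OF row_equivalent_carrier[OF M(1)]]
    unfolding zero_below_diag_upto_def upper_triangular_def by auto
  then show ?thesis using M(1) by blast
qed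

lemma upper_triangular_diag_nonzero:
  fixes M :: "'a :: idom mat"
  assumes "M \<in> carrier_mat n n" "upper_triangular M" "det M \<noteq> 0" "i < n"
  shows "M $$ (i,i) \<noteq> 0"
proof -
  have "0 \<notin> set (diag_mat M)" using upper_triangular_imp_det_eq_0_iff[OF assms(1,2)] assms(3) by auto
  then show ?thesis using assms(1,4) unfolding diag_mat_def by auto
qed

lemma row_equivalent_reduce_entry:
  assumes "row_equivalent n V M" "i < j" "j < n"
  shows "\<exists>M'. row_equivalent n V M' \<and> M' $$ (i,j) = M $$ (i,j) mod M $$ (j,j) \<and>
    (\<forall>r<n. \<forall>c<n. r \<noteq> i \<or> M $$ (j,c) = 0 \<longrightarrow> M' $$ (r,c) = M $$ (r,c))"
proof (intro exI conjI)
  let ?M' = "addrow (- (M $$ (i,j) div M $$ (j,j))) i j M"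
  have M: "M \<in> carrier_mat n n" using row_equivalent_carrier[OF assms(1)] .
  show "row_equivalent n V ?M'" using row_equivalent_addrow assms by simp
  show "?M' $$ (i,j) = M $$ (i,j) mod M $$ (j,j)"
    using M assms(2,3) by (simp add: minus_div_mult_eq_mod[symmetric] algebra_simps)
  show "\<forall>r<n. \<forall>c<n. r \<noteq> i \<or> M $$ (j,c) = 0 \<longrightarrow> ?M' $$ (r,c) = M $$ (r,c)"
    using M by auto
qed

definition normalized_upto :: "nat \<Rightarrow> int mat \<Rightarrow> bool" where
  "normalized_upto j M \<longleftrightarrow>
     (\<forall>c<j. M $$ (c,c) > 0 \<and> (\<forall>i<c. 0 \<le> M $$ (i,c) \<and> M $$ (i,c) < M $$ (c,c)))"

definition hermite_normal_form :: "int mat \<Rightarrow> bool" where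
  "hermite_normal_form H \<longleftrightarrow> upper_triangular H \<and> normalized_upto (dim_col H) H"

lemma hermite_normal_form_entries:
  assumes "H \<in> carrier_mat n n" "hermite_normal_form H"
  shows "\<forall>i<n. \<forall>j<i. H $$ (i,j) = 0" "\<forall>k<n. H $$ (k,k) \<ge> 1"
    "\<forall>k<n. \<forall>i<k. 0 \<le> H $$ (i,k) \<and> H $$ (i,k) < H $$ (k,k)"
  using assms unfolding hermite_normal_form_def upper_triangular_def normalized_upto_def by auto

lemma row_equivalent_reduce_above_pivot:
  assumes M: "row_equivalent n V M" "M $$ (j,j) > 0" and j: "j < n" and "m \<le> j"
  shows "\<exists>M'. row_equivalent n V M' \<and>
    (\<forall>r<n. \<forall>c<n. m \<le> r \<or> M $$ (j,c) = 0 \<longrightarrow> M' $$ (r,c) = M $$ (r,c)) \<and>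
    (\<forall>i<m. 0 \<le> M' $$ (i,j) \<and> M' $$ (i,j) < M $$ (j,j))"
  using \<open>m \<le> j\<close>
proof (induction m)
  case 0
  then show ?case using M(1) by auto
next
  case (Suc m)
  then obtain M' where M': "row_equivalent n V M'"
    "\<forall>r<n. \<forall>c<n. m \<le> r \<or> M $$ (j,c) = 0 \<longrightarrow> M' $$ (r,c) = M $$ (r,c)"
    "\<forall>i<m. 0 \<le> M' $$ (i,j) \<and> M' $$ (i,j) < M $$ (j,j)" by auto
  have row_j: "M' $$ (j,c) = M $$ (j,c)" if "c < n" for c
    using M'(2) Suc.prems j that by auto
  obtain M'' where M'': "row_equivalent n V M''" "M'' $$ (m,j) = M' $$ (m,j) mod M' $$ (j,j)"
    "\<forall>r<n. \<forall>c<n. r \<noteq> m \<or> M' $$ (j,c) = 0 \<longrightarrow> M'' $$ (r,c) = M' $$ (r,c)"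
    using row_equivalent_reduce_entry[OF M'(1), of m j] Suc.prems j by auto
  show ?case
  proof (intro exI[of _ M''] conjI allI impI)
    fix r c assume "r < n" "c < n" "Suc m \<le> r \<or> M $$ (j,c) = 0"
    then show "M'' $$ (r,c) = M $$ (r,c)" using M'(2) M''(3) row_j by auto
  next
    fix i assume "i < Suc m"
    then show "0 \<le> M'' $$ (i,j)" "M'' $$ (i,j) < M $$ (j,j)"
      using M'(3) M''(2,3) row_j[OF j] M(2) Suc.prems j by (auto simp: less_Suc_eq)
  qed (rule M''(1))
qed

lemma row_equivalent_normalize_column:
  assumes M: "row_equivalent n V M" "upper_triangular M" "normalized_upto j M"
    and V: "det V \<noteq> 0" and j: "j < n"
  shows "\<exists>M'. row_equivalent n V M' \<and> upper_triangular M' \<and> normalized_upto (Suc j) M'"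
proof -
  have carrier: "M \<in> carrier_mat n n" using row_equivalent_carrier[OF M(1)] .
  define M1 where "M1 = multrow j (sgn (M $$ (j,j))) M"
  have pivot: "M $$ (j,j) \<noteq> 0"
    using upper_triangular_diag_nonzero[OF carrier M(2) row_equivalent_det_nonzero[OF M(1) V] j] .
  have M1_eq: "M1 $$ (r,c) = (if r = j then sgn (M $$ (j,j)) * M $$ (r,c) else M $$ (r,c))"
    if "r < n" "c < n" for r c
    using that carrier unfolding M1_def by simp
  have M1: "row_equivalent n V M1" "M1 $$ (j,j) > 0"
    using row_equivalent_multrow[OF M(1) j] pivot M1_eq[OF j j]
    unfolding M1_def by (auto simp: sgn_if mult_less_0_iff)
  obtain M' where M': "row_equivalent n V M'"
    "\<forall>r<n. \<forall>c<n. j \<le> r \<or> M1 $$ (j,c) = 0 \<longrightarrow> M' $$ (r,c) = M1 $$ (r,c)"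
    "\<forall>i<j. 0 \<le> M' $$ (i,j) \<and> M' $$ (i,j) < M1 $$ (j,j)"
    using row_equivalent_reduce_above_pivot[OF M1 j order.refl] by blast
  have below: "M1 $$ (r,c) = 0" if "c < r" "r < n" for r c
    using M(2) carrier M1_eq that unfolding upper_triangular_def by auto
  have keep: "M' $$ (r,c) = M1 $$ (r,c)" if "r < n" "c < n" "c < j \<or> j \<le> r" for r c
    using M'(2) below that j by auto
  have "upper_triangular M'"
    using keep below carrier_matD[OF row_equivalent_carrier[OF M'(1)]]
    unfolding upper_triangular_def by (metis less_trans not_less)
  moreover have "normalized_upto (Suc j) M'"
    using M(3) M'(3) M1(2) keep M1_eq j unfolding normalized_upto_def
    by (auto simp: less_Suc_eq)
  ultimately show ?thesis using M'(1) by blast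
qed

theorem hermite_normal_form_exists:
  assumes "V \<in> carrier_mat n n" "det V \<noteq> 0"
  shows "\<exists>U. unimodular n U \<and> hermite_normal_form (U * V)"
proof -
  obtain M0 where M0: "row_equivalent n V M0" "upper_triangular M0"
    using row_equivalent_upper_triangular[OF assms(1)] by blast
  have "\<exists>M. row_equivalent n V M \<and> upper_triangular M \<and> normalized_upto j M" if "j \<le> n" for j
    using that
  proof (induction j)
    case 0
    then show ?case using M0 unfolding normalized_upto_def by auto
  next
    case (Suc j)
    then show ?case using row_equivalent_normalize_column assms(2) by (meson Suc_le_lessD less_imp_le)
  qed
  then obtain M where "row_equivalent n V M" "upper_triangular M" "normalized_upto n M"
    by blast
  then show ?thesis using row_equivalent_carrier unfolding row_equivalent_def hermite_normal_form_def
    by fastforce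
qed

lemma upper_triangular_col_scalar_prod:
  fixes H :: "'a :: comm_ring_1 mat"
  assumes H: "H \<in> carrier_mat n n" "upper_triangular H"
    and G: "G \<in> carrier_vec n" "\<forall>i<j. G $ i = 0" and j: "j < n"
  shows "col H j \<bullet> G = H $$ (j,j) * G $ j"
proof -
  have "col H j \<bullet> G = (\<Sum>i\<in>{0..<n}. H $$ (i,j) * G $ i)"
    using H(1) G(1) j by (simp add: scalar_prod_def)
  also have "\<dots> = (\<Sum>i\<in>{0..<n}. if i = j then H $$ (j,j) * G $ j else 0)"
    using H G(2) j unfolding upper_triangular_def
    by (intro sum.cong) (auto simp: neq_iff)
  also have "\<dots> = H $$ (j,j) * G $ j" using j by simp
  finally show ?thesis .
qed

lemma upper_triangular_diag_dvd_functional: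
  fixes M U :: "int mat" and F :: "int vec"
  assumes U: "unimodular n U" and M: "M \<in> carrier_mat n n"
    and H: "upper_triangular (U * M)" "\<forall>j<k. (U * M) $$ (j,j) \<noteq> 0"
    and F: "F \<in> carrier_vec n" "\<forall>j<k. col M j \<bullet> F = 0" and k: "k < n"
  shows "(U * M) $$ (k,k) dvd col M k \<bullet> F"
proof -
  have Uc: "U \<in> carrier_mat n n" using U unfolding unimodular_def by simp
  obtain U' where U': "U' \<in> carrier_mat n n" "U' * U = 1\<^sub>m n"
    using unimodular_left_inverse[OF U] by blast
  define G where "G = transpose_mat U' *\<^sub>v F"
  have G: "G \<in> carrier_vec n" using U' F unfolding G_def by simp
  have UG: "transpose_mat U *\<^sub>v G = F"
  proof -
    have "transpose_mat U *\<^sub>v G = (transpose_mat U * transpose_mat U') *\<^sub>v F"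
      unfolding G_def using Uc U' F by (simp add: assoc_mult_mat_vec)
    also have "transpose_mat U * transpose_mat U' = transpose_mat (U' * U)"
      using transpose_mult[OF U'(1) Uc] by simp
    also have "\<dots> *\<^sub>v F = F" using U'(2) F by simp
    finally show ?thesis .
  qed
  have pair: "col (U * M) j \<bullet> G = col M j \<bullet> F" if "j < n" for j
  proof -
    have "col (U * M) j \<bullet> G = G \<bullet> (U *\<^sub>v col M j)"
      unfolding col_mult2[OF Uc M that] using Uc M G that by (simp add: comm_scalar_prod[of G n])
    also have "\<dots> = F \<bullet> col M j"
      using transpose_vec_mult_scalar[OF Uc _ G, of "col M j"] M that UG by simp
    finally show ?thesis using M F that by (simp add: comm_scalar_prod[of F n])
  qed
  have HG: "col (U * M) j \<bullet> G = (U * M) $$ (j,j) * G $ j" if "\<forall>i<j. G $ i = 0" "j < n" for j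
    using upper_triangular_col_scalar_prod[OF _ H(1) G that] Uc M by simp
  have G0: "\<forall>i<k. G $ i = 0"
  proof (intro allI impI)
    fix i assume "i < k"
    then show "G $ i = 0"
    proof (induction i rule: less_induct)
      case (less i)
      then have "(U * M) $$ (i,i) * G $ i = 0" using HG[of i] pair[of i] F(2) k by auto
      then show ?case using H(2) less.prems by simp
    qed
  qed
  show ?thesis using HG[OF G0 k] pair[OF k] by (metis dvd_triv_left)
qed

lemma nonsingular_system_ex1:
  fixes A :: "'a :: field mat"
  assumes A: "A \<in> carrier_mat n n" "det A \<noteq> 0" and b: "b \<in> carrier_vec n"
  shows "\<exists>!x. x \<in> carrier_vec n \<and> A *\<^sub>v x = b"
proof (rule ex_ex1I)
  let ?x = "(1 / det A) \<cdot>\<^sub>v (adj_mat A *\<^sub>v b)"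
  have "A *\<^sub>v ?x = (1 / det A) \<cdot>\<^sub>v ((A * adj_mat A) *\<^sub>v b)"
    using A(1) adj_mat(1)[OF A(1)] b by (simp add: mult_mat_vec assoc_mult_mat_vec)
  also have "(A * adj_mat A) *\<^sub>v b = det A \<cdot>\<^sub>v b"
    unfolding adj_mat(2)[OF A(1)] using b by auto
  also have "(1 / det A) \<cdot>\<^sub>v (det A \<cdot>\<^sub>v b) = b" using A(2) by (simp add: smult_smult_assoc)
  finally show "\<exists>x. x \<in> carrier_vec n \<and> A *\<^sub>v x = b" using A(1) adj_mat(1)[OF A(1)] b
    by (intro exI[of _ ?x]) simp
next
  fix x y assume x: "x \<in> carrier_vec n \<and> A *\<^sub>v x = b" and y: "y \<in> carrier_vec n \<and> A *\<^sub>v y = b"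
  then have "A *\<^sub>v (x - y) = 0\<^sub>v n"
    using A(1) by (auto simp: mult_minus_distrib_mat_vec)
  then have "x - y = 0\<^sub>v n"
    using det_0_iff_vec_prod_zero_field[OF A(1)] A(2) minus_carrier_vec[of x n y] x y by blast
  show "x = y"
  proof (rule eq_vecI)
    fix i assume "i < dim_vec y"
    then have "(x - y) $ i = 0" using \<open>x - y = 0\<^sub>v n\<close> y by auto
    then show "x $ i = y $ i" using \<open>i < dim_vec y\<close> x y by simp
  qed (use x y in auto)
qed

lemma sum_atMost_eq_zero_split:
  fixes p :: "nat \<Rightarrow> 'a :: comm_ring_1"
  assumes "(\<Sum>j\<le>d. p j) = 0" "\<forall>j<k. p j = 0" "k \<le> d"
  shows "- p d = (\<Sum>j\<in>{k..<d}. p j)"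
proof -
  have "(\<Sum>j\<le>d. p j) = (\<Sum>j\<in>{0..<k}. p j) + (\<Sum>j\<in>{k..<d}. p j) + p d"
    using sum.atLeastLessThan_concat[of 0 k d p] assms(3)
    by (simp add: lessThan_Suc_atMost[symmetric] atLeast0LessThan)
  then show ?thesis using assms(1,2) by (simp add: add_eq_0_iff)
qed

definition skip :: "nat \<Rightarrow> nat \<Rightarrow> nat" where
  "skip k c = (if c < k then c else Suc c)"

lemma bij_betw_skip:
  assumes "k \<le> d"
  shows "bij_betw (skip k) {..<d} ({..d} - {k})"
proof -
  have "j \<in> skip k ` {..<d}" if "j \<le> d" "j \<noteq> k" for j
    using that assms unfolding skip_def
    by (cases "j < k") (auto intro: image_eqI[of _ _ j] image_eqI[of _ _ "j - 1"])
  then show ?thesis unfolding bij_betw_def inj_on_def skip_def by auto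
qed

lemma all_skip_iff:
  assumes "k \<le> d"
  shows "(\<forall>j\<le>d. j \<noteq> k \<longrightarrow> Q j) \<longleftrightarrow> (\<forall>c<d. Q (skip k c))"
proof -
  have "{..d} - {k} = skip k ` {..<d}" using bij_betw_skip[OF assms] by (simp add: bij_betw_def)
  then have "(\<forall>j\<in>{..d} - {k}. Q j) \<longleftrightarrow> (\<forall>c\<in>{..<d}. Q (skip k c))" by simp
  then show ?thesis by auto
qed

lemma sum_skip:
  assumes "k \<le> d"
  shows "(\<Sum>j\<le>d. f j) = f k + (\<Sum>c<d. f (skip k c))"
  using assms sum.remove[of "{..d}" k f] sum.reindex_bij_betw[OF bij_betw_skip[OF assms], of f]
  by simp

definition facet_mat :: "nat \<Rightarrow> (nat \<Rightarrow> nat \<Rightarrow> int) \<Rightarrow> nat \<Rightarrow> int mat" where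
  "facet_mat d v k = mat d d (\<lambda>(r, c). v (skip k c) r)"

lemma facet_mat_carrier: "facet_mat d v k \<in> carrier_mat d d"
  unfolding facet_mat_def by simp

lemma weight_facet_mat: "weight d v k = nat \<bar>det (facet_mat d v k)\<bar>"
  unfolding weight_def facet_mat_def skip_def by simp

lemma col_facet_mat_last: "j < d \<Longrightarrow> col (facet_mat d v d) j = vec d (v j)"
  unfolding facet_mat_def skip_def by auto

text \<open>Laplace expansion along the first row of a matrix whose first row repeats its row \<open>i + 1\<close>.\<close>
lemma alternating_cofactor_sum:
  assumes i: "i < d"
  shows "(\<Sum>j\<le>d. (-1)^j * det (facet_mat d v j) * v j i) = 0"
proof -
  define B where "B = mat (Suc d) (Suc d) (\<lambda>(r,c). if r = 0 then v c i else v c (r - 1))"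
  have B: "B \<in> carrier_mat (Suc d) (Suc d)" unfolding B_def by simp
  have "row B 0 = row B (Suc i)" unfolding B_def using i by (intro eq_vecI) auto
  then have "det B = 0" using det_identical_rows[OF B, of 0 "Suc i"] i by auto
  moreover have "det B = (\<Sum>j<Suc d. B $$ (0,j) * cofactor B 0 j)"
    using laplace_expansion_row[OF B, of 0] by simp
  moreover have "mat_delete B 0 j = facet_mat d v j" for j
    unfolding mat_delete_def B_def facet_mat_def skip_def by (rule eq_matI) auto
  ultimately have "(\<Sum>j<Suc d. v j i * ((-1)^j * det (facet_mat d v j))) = 0"
    unfolding cofactor_def B_def by simp
  then show ?thesis unfolding lessThan_Suc_atMost by (simp add: algebra_simps)
qed

lemma common_denominator:
  fixes f :: "nat \<Rightarrow> rat"
  shows "\<exists>g::nat. g \<ge> 1 \<and> (\<forall>i<m. of_nat g * f i \<in> \<int>)"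
proof (induction m)
  case 0
  then show ?case by auto
next
  case (Suc m)
  then obtain g :: nat where g: "g \<ge> 1" "\<forall>i<m. of_nat g * f i \<in> \<int>" by auto
  obtain p q where pq: "quotient_of (f m) = (p, q)" by (cases "quotient_of (f m)")
  have q: "q > 0" and fm: "of_int q * f m = of_int p"
    using quotient_of_denom_pos[OF pq] quotient_of_div[OF pq] by auto
  have "of_nat (g * nat q) * f i \<in> \<int>" if "i < Suc m" for i
  proof (cases "i = m")
    case True
    then show ?thesis using fm q by (simp add: mult.assoc)
  next
    case False
    then have "of_nat g * f i \<in> \<int>" using g(2) that by simp
    moreover have "of_nat (g * nat q) * f i = of_int q * (of_nat g * f i)" using q by simp
    ultimately show ?thesis by (metis Ints_mult Ints_of_int)
  qed
  then show ?case using g(1) q by (intro exI[of _ "g * nat q"]) (simp add: Suc_leI)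
qed

lemma local_gorenstein_index:
  "local_gorenstein_index d v k \<ge> 1"
  "i < d \<Longrightarrow> of_nat (local_gorenstein_index d v k) * dual_vertex d v k i \<in> \<int>"
  using LeastI_ex[OF common_denominator[of d "dual_vertex d v k"]]
  unfolding local_gorenstein_index_def by auto

lemma gorenstein_index_pos: "gorenstein_index d v \<ge> 1"
  using local_gorenstein_index(1)[of d v] Lcm_0_iff_nat[of "local_gorenstein_index d v ` {..d}"]
  unfolding gorenstein_index_def by (metis finite_atMost finite_imageI imageE less_one not_less)

lemma gorenstein_index_dual_vertex_Ints:
  assumes "k \<le> d" "i < d"
  shows "of_nat (gorenstein_index d v) * dual_vertex d v k i \<in> \<int>"
proof -
  have "local_gorenstein_index d v k dvd gorenstein_index d v"
    unfolding gorenstein_index_def using assms(1) by (intro dvd_Lcm) auto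
  then obtain t where "gorenstein_index d v = local_gorenstein_index d v k * t" by (rule dvdE)
  then show ?thesis using local_gorenstein_index(2)[OF assms(2), of v k]
    by (simp add: mult.commute mult.left_commute)
qed

locale IP_simplex =
  fixes d :: nat and v :: "nat \<Rightarrow> nat \<Rightarrow> int"
  assumes IP: "IP_lattice_simplex d v"
begin

definition bary :: "nat \<Rightarrow> rat" where
  "bary = (SOME l. (\<forall>j\<le>d. l j \<ge> 0) \<and> (\<Sum>j\<le>d. l j) = 1 \<and>
      (\<forall>i<d. (\<Sum>j\<le>d. l j * of_int (v j i)) = 0))"

lemma bary:
  "\<And>j. j \<le> d \<Longrightarrow> bary j \<ge> 0"
  "(\<Sum>j\<le>d. bary j) = 1"
  "\<And>i. i < d \<Longrightarrow> (\<Sum>j\<le>d. bary j * of_int (v j i)) = 0"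
proof -
  obtain e :: rat where "e > 0" "\<forall>x. (\<forall>i<d. \<bar>x i\<bar> < e) \<longrightarrow> in_conv d v x"
    using IP unfolding IP_lattice_simplex_def origin_in_interior_def by blast
  then have "in_conv d v (\<lambda>_. 0)" by simp
  then obtain l :: "nat \<Rightarrow> rat" where "\<forall>j\<le>d. l j \<ge> 0" "(\<Sum>j\<le>d. l j) = 1"
    "\<forall>i<d. 0 = (\<Sum>j\<le>d. l j * of_int (v j i))"
    unfolding in_conv_def by blast
  then have "\<exists>l :: nat \<Rightarrow> rat. (\<forall>j\<le>d. l j \<ge> 0) \<and> (\<Sum>j\<le>d. l j) = 1 \<and>
      (\<forall>i<d. (\<Sum>j\<le>d. l j * of_int (v j i)) = 0)"
    by (intro exI[of _ l]) auto
  from someI_ex[OF this] show "\<And>j. j \<le> d \<Longrightarrow> bary j \<ge> 0" "(\<Sum>j\<le>d. bary j) = 1"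
    "\<And>i. i < d \<Longrightarrow> (\<Sum>j\<le>d. bary j * of_int (v j i)) = 0"
    unfolding bary_def by auto
qed

text \<open>\<open>m - (\<Sum>m) \<cdot> bary\<close> is an affine dependence among the vertices, hence zero.\<close>
lemma linear_relation_eq_bary:
  assumes "\<forall>i<d. (\<Sum>j\<le>d. m j * of_int (v j i)) = 0" "j \<le> d"
  shows "m j = (\<Sum>j\<le>d. m j) * bary j"
proof -
  define m' where "m' j = m j - (\<Sum>j\<le>d. m j) * bary j" for j
  have "(\<Sum>j\<le>d. m' j) = 0"
    unfolding m'_def by (simp add: sum_subtractf sum_distrib_left[symmetric] bary(2))
  moreover have "(\<Sum>j\<le>d. m' j * of_int (v j i)) = 0" if "i < d" for i
  proof -
    have "(\<Sum>j\<le>d. m' j * of_int (v j i)) = (\<Sum>j\<le>d. m j * of_int (v j i)) -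
        (\<Sum>j\<le>d. m j) * (\<Sum>j\<le>d. bary j * of_int (v j i))"
      unfolding m'_def by (simp add: algebra_simps sum_subtractf sum_distrib_left)
    then show ?thesis using assms(1) bary(3) that by simp
  qed
  ultimately have "m' j = 0"
    using IP assms(2) unfolding IP_lattice_simplex_def affinely_indep_def by blast
  then show ?thesis unfolding m'_def by simp
qed

text \<open>Move the origin slightly towards \<open>-v\<^sub>k\<close>; it stays in the simplex, which forces a positive
  coefficient at \<open>v\<^sub>k\<close> in the barycentric relation.\<close>
lemma bary_pos:
  assumes k: "k \<le> d"
  shows "bary k > 0"
proof -
  obtain e :: rat where e: "e > 0" "\<forall>x. (\<forall>i<d. \<bar>x i\<bar> < e) \<longrightarrow> in_conv d v x"
    using IP unfolding IP_lattice_simplex_def origin_in_interior_def by blast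
  define B where "B = (\<Sum>i<d. \<bar>of_int (v k i) :: rat\<bar>)"
  define t where "t = e / (1 + B)"
  have B: "B \<ge> 0" unfolding B_def by (simp add: sum_nonneg)
  then have t: "t > 0" unfolding t_def using e by simp
  have "\<bar>t * of_int (v k i)\<bar> < e" if "i < d" for i
  proof -
    have "\<bar>of_int (v k i) :: rat\<bar> \<le> B" unfolding B_def by (rule member_le_sum) (use that in auto)
    then have "\<bar>t * of_int (v k i)\<bar> \<le> t * B" using t by (simp add: abs_mult)
    also have "\<dots> < t * (1 + B)" using t by simp
    finally show ?thesis unfolding t_def using B by simp
  qed
  then have "in_conv d v (\<lambda>i. - t * of_int (v k i))" using e(2) by simp
  then obtain \<mu> where \<mu>: "\<forall>j\<le>d. \<mu> j \<ge> 0" "(\<Sum>j\<le>d. \<mu> j) = 1"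
    "\<forall>i<d. - t * of_int (v k i) = (\<Sum>j\<le>d. \<mu> j * of_int (v j i))"
    unfolding in_conv_def by blast
  define m where "m j = \<mu> j + (if j = k then t else 0)" for j
  have "(\<Sum>j\<le>d. m j * of_int (v j i)) = 0" if "i < d" for i
  proof -
    have "(\<Sum>j\<le>d. (if j = k then t else 0) * of_int (v j i)) =
        (\<Sum>j\<le>d. if j = k then t * of_int (v k i) else 0)"
      by (rule sum.cong) auto
    also have "\<dots> = t * of_int (v k i)" using k by simp
    finally show ?thesis using \<mu>(3)[rule_format, OF that] unfolding m_def
      by (simp add: distrib_right sum.distrib)
  qed
  then have "m k = (\<Sum>j\<le>d. m j) * bary k" using linear_relation_eq_bary k by blast
  moreover have "(\<Sum>j\<le>d. m j) = 1 + t" unfolding m_def using \<mu>(2) k by (simp add: sum.distrib)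
  moreover have "m k \<ge> t" unfolding m_def using \<mu>(1) k by simp
  ultimately have "(1 + t) * bary k > 0" using t by simp
  then show ?thesis using t by (simp add: zero_less_mult_iff)
qed

lemma det_facet_mat_nonzero:
  assumes k: "k \<le> d"
  shows "det (facet_mat d v k) \<noteq> 0"
proof
  assume "det (facet_mat d v k) = 0"
  then obtain x where x: "x \<in> carrier_vec d" "x \<noteq> 0\<^sub>v d" "facet_mat d v k *\<^sub>v x = 0\<^sub>v d"
    using det_0_iff_vec_prod_zero[OF facet_mat_carrier] by blast
  define m :: "nat \<Rightarrow> rat" where "m j = (if j = k then 0 else of_int (x $ (if j < k then j else j - 1)))" for j
  have m_skip: "m (skip k c) = of_int (x $ c)" for c unfolding m_def skip_def by auto
  have rel: "\<forall>i<d. (\<Sum>j\<le>d. m j * of_int (v j i)) = 0"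
  proof (intro allI impI)
    fix i assume i: "i < d"
    have "(\<Sum>j\<le>d. m j * of_int (v j i)) = of_int (\<Sum>c<d. v (skip k c) i * x $ c)"
      using sum_skip[OF k, of "\<lambda>j. m j * of_int (v j i)"] m_skip by (simp add: m_def mult.commute)
    also have "(\<Sum>c<d. v (skip k c) i * x $ c) = (facet_mat d v k *\<^sub>v x) $ i"
      using i x(1) unfolding facet_mat_def by (auto simp: scalar_prod_def atLeast0LessThan)
    finally show "(\<Sum>j\<le>d. m j * of_int (v j i)) = 0" using x(3) i by simp
  qed
  have "(\<Sum>j\<le>d. m j) = 0" using linear_relation_eq_bary[OF rel k] bary_pos[OF k] by (simp add: m_def)
  moreover have "skip k c \<le> d" if "c < d" for c using that unfolding skip_def by simp
  ultimately have "m (skip k c) = 0" if "c < d" for c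
    using linear_relation_eq_bary[OF rel, of "skip k c"] that by simp
  then have "x = 0\<^sub>v d" using m_skip x(1) by (intro eq_vecI) auto
  then show False using x(2) by simp
qed

lemma weight_pos: "j \<le> d \<Longrightarrow> weight d v j > 0"
  using det_facet_mat_nonzero unfolding weight_facet_mat by simp

text \<open>The signed maximal minors \<open>(-1)^j det(v\<^sub>i : i \<noteq> j)\<close> form a linear relation among the
  vertices, hence are proportional to the barycentric coordinates.\<close>
lemma weight_eq_bary:
  assumes j: "j \<le> d"
  shows "of_nat (weight d v j) = of_nat (total_weight d v) * bary j"
proof -
  define c :: "nat \<Rightarrow> rat" where "c j = of_int ((-1)^j * det (facet_mat d v j))" for j
  have "(\<Sum>j\<le>d. c j * of_int (v j i)) = 0" if "i < d" for i
  proof -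
    have "(\<Sum>j\<le>d. c j * of_int (v j i)) = of_int (\<Sum>j\<le>d. (-1)^j * det (facet_mat d v j) * v j i)"
      unfolding c_def by simp
    then show ?thesis unfolding alternating_cofactor_sum[OF that] by simp
  qed
  then have c: "c j = (\<Sum>j\<le>d. c j) * bary j" if "j \<le> d" for j
    using linear_relation_eq_bary that by simp
  have weight: "of_nat (weight d v j) = \<bar>\<Sum>j\<le>d. c j\<bar> * bary j" if "j \<le> d" for j
  proof -
    have "of_nat (weight d v j) = \<bar>c j\<bar>" unfolding weight_facet_mat c_def by (simp add: abs_mult)
    then show ?thesis using c[OF that] bary(1)[OF that] by (simp add: abs_mult)
  qed
  have "of_nat (total_weight d v) = \<bar>\<Sum>j\<le>d. c j\<bar>"
    unfolding total_weight_def using weight bary(2) by (simp add: sum_distrib_left[symmetric])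
  then show ?thesis using weight[OF j] by simp
qed

lemma dual_vertex_ex1:
  assumes k: "k \<le> d"
  shows "\<exists>!u :: nat \<Rightarrow> rat. (\<forall>i\<ge>d. u i = 0) \<and> (\<forall>j\<le>d. j \<noteq> k \<longrightarrow> (\<Sum>i<d. u i * of_int (v j i)) = -1)"
proof -
  define A where "A = transpose_mat (map_mat rat_of_int (facet_mat d v k))"
  have A: "A \<in> carrier_mat d d" unfolding A_def facet_mat_def by simp
  have "det A = of_int (det (facet_mat d v k))"
    unfolding A_def using det_transpose[of "map_mat rat_of_int (facet_mat d v k)" d] facet_mat_carrier
    by simp
  then have "det A \<noteq> 0" using det_facet_mat_nonzero[OF k] by simp
  then obtain x where x: "x \<in> carrier_vec d" "A *\<^sub>v x = vec d (\<lambda>_. -1)"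
    and x_unique: "\<And>y. y \<in> carrier_vec d \<Longrightarrow> A *\<^sub>v y = vec d (\<lambda>_. -1) \<Longrightarrow> y = x"
    using nonsingular_system_ex1[OF A, of "vec d (\<lambda>_. -1)"] by auto
  have A_row: "(A *\<^sub>v vec d u) $ r = (\<Sum>i<d. u i * of_int (v (skip k r) i))"
    if "r < d" for u :: "nat \<Rightarrow> rat" and r
    using that unfolding A_def facet_mat_def
    by (auto simp: scalar_prod_def atLeast0LessThan mult.commute intro!: sum.cong)
  have solves: "(\<forall>j\<le>d. j \<noteq> k \<longrightarrow> (\<Sum>i<d. u i * of_int (v j i)) = -1) \<longleftrightarrow>
      A *\<^sub>v vec d u = vec d (\<lambda>_. -1)" for u :: "nat \<Rightarrow> rat"
    unfolding all_skip_iff[OF k] vec_eq_iff using A A_row by auto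
  show ?thesis
  proof (rule ex1I[of _ "\<lambda>i. if i < d then x $ i else 0"])
    have "vec d (\<lambda>i. if i < d then x $ i else 0) = x" using x(1) by auto
    then show "(\<forall>i\<ge>d. (if i < d then x $ i else 0) = 0) \<and>
      (\<forall>j\<le>d. j \<noteq> k \<longrightarrow> (\<Sum>i<d. (if i < d then x $ i else 0) * of_int (v j i)) = -1)"
      unfolding solves using x(2) by simp
  next
    fix u :: "nat \<Rightarrow> rat" assume u: "(\<forall>i\<ge>d. u i = 0) \<and> (\<forall>j\<le>d. j \<noteq> k \<longrightarrow> (\<Sum>i<d. u i * of_int (v j i)) = -1)"
    then have "vec d u = x" using x_unique solves by simp
    then show "u = (\<lambda>i. if i < d then x $ i else 0)" using u by (auto simp: not_less)
  qed
qed

lemma dual_vertex_pairing: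
  assumes "k \<le> d" "j \<le> d" "j \<noteq> k"
  shows "(\<Sum>i<d. dual_vertex d v k i * of_int (v j i)) = -1"
  using theI'[OF dual_vertex_ex1[OF assms(1)]] assms(2,3) unfolding dual_vertex_def by auto

lemma dual_vertex_pairing_self:
  assumes k: "k \<le> d"
  shows "bary k * (\<Sum>i<d. dual_vertex d v k i * of_int (v k i)) = 1 - bary k"
proof -
  let ?u = "dual_vertex d v k"
  have "0 = (\<Sum>i<d. ?u i * (\<Sum>j\<le>d. bary j * of_int (v j i)))" using bary(3) by simp
  also have "\<dots> = (\<Sum>j\<le>d. bary j * (\<Sum>i<d. ?u i * of_int (v j i)))"
    by (simp add: sum_distrib_left sum.swap[of _ "{..<d}"] algebra_simps)
  also have "\<dots> = bary k * (\<Sum>i<d. ?u i * of_int (v k i)) +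
      (\<Sum>j\<in>{..d} - {k}. bary j * (\<Sum>i<d. ?u i * of_int (v j i)))"
    using k by (simp add: sum.remove)
  also have "(\<Sum>j\<in>{..d} - {k}. bary j * (\<Sum>i<d. ?u i * of_int (v j i))) = - (\<Sum>j\<in>{..d} - {k}. bary j)"
    using dual_vertex_pairing[OF k] by (simp add: sum_negf)
  also have "\<dots> = - (1 - bary k)" using bary(2) k by (simp add: sum.remove)
  finally show ?thesis by simp
qed

abbreviation (input) g :: nat where "g \<equiv> gorenstein_index d v"

lemma gorenstein_div_bary:
  assumes k: "k \<le> d"
  shows "of_nat g / bary k = (\<Sum>i<d. of_nat g * dual_vertex d v k i * of_int (v k i)) + of_nat g"
proof -
  have "(\<Sum>i<d. dual_vertex d v k i * of_int (v k i)) = 1 / bary k - 1"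
    using dual_vertex_pairing_self[OF k] bary_pos[OF k] by (simp add: field_simps)
  then have "(\<Sum>i<d. of_nat g * dual_vertex d v k i * of_int (v k i)) = of_nat g * (1 / bary k - 1)"
    by (simp add: sum_distrib_left[symmetric] mult.assoc)
  then show ?thesis by (simp add: field_simps)
qed

lemma alpha_eq:
  assumes k: "k \<le> d"
  shows "of_nat (alpha d v k) = of_nat g / bary k"
proof -
  have "of_nat g * dual_vertex d v k i * of_int (v k i) \<in> \<int>" if "i < d" for i
    using gorenstein_index_dual_vertex_Ints[OF k that] by (rule Ints_mult) simp
  then have "of_nat g / bary k \<in> \<int>"
    unfolding gorenstein_div_bary[OF k] by (intro Ints_add Ints_sum) auto
  then obtain N :: int where N: "of_int N = of_nat g / bary k" by (elim Ints_cases) simp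
  have "of_nat g / bary k > 0" using gorenstein_index_pos[of d v] bary_pos[OF k] by simp
  then have "N \<ge> 0" using N by linarith
  define n where "n = nat N"
  have n: "of_nat n = of_nat g / bary k" using N \<open>N \<ge> 0\<close> unfolding n_def by simp
  have "(of_nat (g * total_weight d v) :: rat) = of_nat (n * weight d v k)"
    using n weight_eq_bary[OF k] bary_pos[OF k] by simp
  then have "g * total_weight d v = n * weight d v k" by (simp only: of_nat_eq_iff)
  then have "alpha d v k = n" unfolding alpha_def using weight_pos[OF k] by simp
  then show ?thesis using n by simp
qed

lemma alpha_pos:
  assumes k: "k \<le> d"
  shows "alpha d v k > 0"
proof -
  have "(of_nat (alpha d v k) :: rat) > 0"
    unfolding alpha_eq[OF k] using gorenstein_index_pos[of d v] bary_pos[OF k] by simp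
  then show ?thesis by simp
qed

lemma wvec_eq:
  assumes j: "j \<le> d"
  shows "of_nat (wvec d v j) = of_nat (Lcm (alpha d v ` {..d})) / of_nat g * bary j"
proof -
  have "alpha d v j dvd Lcm (alpha d v ` {..d})" using j by (intro dvd_Lcm) auto
  then obtain t where t: "Lcm (alpha d v ` {..d}) = alpha d v j * t" by (rule dvdE)
  then have "wvec d v j = t" unfolding wvec_def using alpha_pos[OF j] by simp
  then show ?thesis using t alpha_eq[OF j] bary_pos[OF j] gorenstein_index_pos[of d v]
    by (simp add: field_simps)
qed

lemma wvec_relation:
  assumes i: "i < d"
  shows "(\<Sum>j\<le>d. int (wvec d v j) * v j i) = 0"
proof -
  have "(of_int (\<Sum>j\<le>d. int (wvec d v j) * v j i) :: rat) =
      (\<Sum>j\<le>d. of_nat (wvec d v j) * of_int (v j i))" by simp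
  also have "\<dots> = of_nat (Lcm (alpha d v ` {..d})) / of_nat g * (\<Sum>j\<le>d. bary j * of_int (v j i))"
    by (simp add: wvec_eq sum_distrib_left mult.assoc)
  also have "\<dots> = 0" using bary(3)[OF i] by simp
  finally show ?thesis by (simp only: of_int_eq_0_iff)
qed

text \<open>The witness is \<open>g (u\<^sub>k - u\<^sub>d)\<close>, integral by the choice of the Gorenstein index.\<close>
lemma alpha_functional:
  assumes k: "k < d"
  shows "\<exists>F. F \<in> carrier_vec d \<and> (\<forall>j<d. j \<noteq> k \<longrightarrow> vec d (v j) \<bullet> F = 0) \<and>
    vec d (v k) \<bullet> F = int (alpha d v k)"
proof -
  let ?u = "dual_vertex d v"
  define F where "F = vec d (\<lambda>i. \<lfloor>of_nat g * ?u k i - of_nat g * ?u d i\<rfloor>)"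
  have F: "of_int (F $ i) = of_nat g * ?u k i - of_nat g * ?u d i" if "i < d" for i
  proof -
    have "of_nat g * ?u k i - of_nat g * ?u d i \<in> \<int>"
      using gorenstein_index_dual_vertex_Ints[OF _ that, of k] gorenstein_index_dual_vertex_Ints[OF _ that, of d]
        k by (intro Ints_diff) auto
    then obtain z where "of_nat g * ?u k i - of_nat g * ?u d i = of_int z" by (elim Ints_cases)
    then show ?thesis unfolding F_def using that by simp
  qed
  have pairing: "(of_int (vec d (v j) \<bullet> F) :: rat) =
      of_nat g * (\<Sum>i<d. ?u k i * of_int (v j i)) - of_nat g * (\<Sum>i<d. ?u d i * of_int (v j i))" for j
  proof -
    have "(of_int (vec d (v j) \<bullet> F) :: rat) = (\<Sum>i<d. of_int (v j i) * of_int (F $ i))"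
      unfolding F_def by (simp add: scalar_prod_def atLeast0LessThan)
    also have "\<dots> = (\<Sum>i<d. (of_nat g * ?u k i - of_nat g * ?u d i) * of_int (v j i))"
      using F by (intro sum.cong) auto
    finally show ?thesis by (simp add: sum_distrib_left algebra_simps sum_subtractf)
  qed
  have "vec d (v j) \<bullet> F = 0" if "j < d" "j \<noteq> k" for j
    using pairing[of j] dual_vertex_pairing[of k j] dual_vertex_pairing[of d j] that k by simp
  moreover have "(of_int (vec d (v k) \<bullet> F) :: rat) = of_nat (alpha d v k)"
    unfolding pairing alpha_eq[OF less_imp_le[OF k]] gorenstein_div_bary[OF less_imp_le[OF k]]
    using dual_vertex_pairing[of d k] k by (simp add: sum_distrib_left mult.assoc)
  then have "vec d (v k) \<bullet> F = int (alpha d v k)"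
    by (metis of_int_eq_iff of_int_of_nat_eq)
  moreover have "F \<in> carrier_vec d" unfolding F_def by simp
  ultimately show ?thesis by blast
qed

lemma hermite_normal_form_diag_dvd_alpha:
  assumes U: "unimodular d U" and H: "hermite_normal_form (U * facet_mat d v d)" and k: "k < d"
  shows "(U * facet_mat d v d) $$ (k,k) dvd int (alpha d v k)"
proof -
  obtain F where F: "F \<in> carrier_vec d" "\<forall>j<d. j \<noteq> k \<longrightarrow> vec d (v j) \<bullet> F = 0"
    "vec d (v k) \<bullet> F = int (alpha d v k)"
    using alpha_functional[OF k] by blast
  have "\<forall>j<k. (U * facet_mat d v d) $$ (j,j) \<noteq> 0"
    using hermite_normal_form_entries(2)[OF unimodular_mult_carrier[OF U facet_mat_carrier] H] k
    by (metis less_trans not_one_le_zero)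
  moreover have "upper_triangular (U * facet_mat d v d)" using H unfolding hermite_normal_form_def by simp
  ultimately have "(U * facet_mat d v d) $$ (k,k) dvd col (facet_mat d v d) k \<bullet> F"
    using F(2) k by (intro upper_triangular_diag_dvd_functional[OF U facet_mat_carrier _ _ F(1)])
      (auto simp: col_facet_mat_last)
  then show ?thesis using F(3) k by (simp add: col_facet_mat_last)
qed

lemma row_combination_wvec:
  "(\<Sum>j\<le>d. (\<Sum>l<d. U $$ (k,l) * v j l) * int (wvec d v j)) = 0"
proof -
  have "(\<Sum>j\<le>d. (\<Sum>l<d. U $$ (k,l) * v j l) * int (wvec d v j)) =
      (\<Sum>j\<le>d. \<Sum>l<d. U $$ (k,l) * (int (wvec d v j) * v j l))"
    by (simp add: sum_distrib_left sum_distrib_right ac_simps)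
  also have "\<dots> = (\<Sum>l<d. \<Sum>j\<le>d. U $$ (k,l) * (int (wvec d v j) * v j l))"
    by (rule sum.swap)
  also have "\<dots> = (\<Sum>l<d. U $$ (k,l) * (\<Sum>j\<le>d. int (wvec d v j) * v j l))"
    by (simp add: sum_distrib_left)
  also have "\<dots> = 0" using wvec_relation by simp
  finally show ?thesis .
qed

end

theorem proposition5p2:
  fixes d :: nat and v :: "nat \<Rightarrow> nat \<Rightarrow> int"
  assumes "d \<ge> 2" and "IP_lattice_simplex d v"
  shows "\<exists>(\<sigma> :: nat \<Rightarrow> nat) (U :: int mat) (P :: nat \<Rightarrow> nat \<Rightarrow> int).
     \<sigma> permutes {..d} \<and>
     U \<in> carrier_mat d d \<and> (det U = 1 \<or> det U = -1) \<and>
     (\<forall>j\<le>d. \<forall>i<d. P i j = (\<Sum>l<d. U $$ (i, l) * v (\<sigma> j) l)) \<and>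
     (\<forall>i<d. \<forall>j<d. j < i \<longrightarrow> P i j = 0) \<and>
     (\<forall>k<d. P k k \<ge> 1 \<and> P k k dvd int (alpha d (v \<circ> \<sigma>) k)) \<and>
     (\<forall>k<d. \<forall>i<k. 0 \<le> P i k \<and> P i k < P k k) \<and>
     (\<forall>k<d. - P k d * int (wvec d (v \<circ> \<sigma>) d) =
              (\<Sum>j\<in>{k..<d}. P k j * int (wvec d (v \<circ> \<sigma>) j)))"
proof -
  interpret IP_simplex d v by unfold_locales (fact assms(2))
  obtain U where U: "unimodular d U" and H: "hermite_normal_form (U * facet_mat d v d)"
    using hermite_normal_form_exists[OF facet_mat_carrier det_facet_mat_nonzero] by blast
  define P where "P i j = (\<Sum>l<d. U $$ (i, l) * v j l)" for i j
  have P_H: "P i j = (U * facet_mat d v d) $$ (i,j)" if "i < d" "j < d" for i j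
    using that U unfolding P_def facet_mat_def skip_def unimodular_def
    by (auto simp: scalar_prod_def atLeast0LessThan intro!: sum.cong)
  from hermite_normal_form_entries[OF unimodular_mult_carrier[OF U facet_mat_carrier] H]
  have shape: "\<forall>i<d. \<forall>j<d. j < i \<longrightarrow> P i j = 0" "\<forall>k<d. P k k \<ge> 1"
    "\<forall>k<d. \<forall>i<k. 0 \<le> P i k \<and> P i k < P k k"
    using P_H by auto
  have "P k k dvd int (alpha d v k)" if "k < d" for k
    using hermite_normal_form_diag_dvd_alpha[OF U H that] P_H that by simp
  moreover have "- P k d * int (wvec d v d) = (\<Sum>j\<in>{k..<d}. P k j * int (wvec d v j))"
    if "k < d" for k
    using sum_atMost_eq_zero_split[OF row_combination_wvec[of U k, folded P_def]] shape(1) that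
    by simp
  ultimately show ?thesis using U shape unfolding unimodular_def
    by (intro exI[of _ id] exI[of _ U] exI[of _ P]) (auto simp: P_def)
qed

end
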